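(* Let $\mathcal{M}_\Sigma$ be a trace monoid, $a_1\in\Sigma$ and $p\in(0,p_\Sigma)$. Then $$B_{\Sigma,p}\bigl(\mathrm{Pyr}(a_1)\bigr)=\mu_\Sigma(p)\,p\,\frac{\mu_{\Sigma\setminus\mathscr{L}(a_1)}(p)}{\mu_{\Sigma\setminus\{a_1\}}(p)}.$$
   Context: Let $\Sigma$ be a finite alphabet and $\mathcal{R}$ a reflexive and symmetric binary relation on $\Sigma$. The trace monoid $\mathcal{M}_\Sigma$ is the quotient of $\Sigma^*$ by the congruence generated by $ab=ba$ for all $(a,b)\notin\mathcal{R}$. For $\Sigma'\subseteq\Sigma$, $\mathcal{M}_{\Sigma'}$ is the submonoid generated by $\Sigma'$. $|x|$ is the length of $x$; $\max(x)$ is the set of letters $a$ with $x=y\cdot a$ for some trace $y$. $\mathscr{L}(a)=\{b\in\Sigma:(a,b)\in\mathcal{R}\}$. $\mathrm{Pyr}(a_1)=\{z\cdot a_1: z\in\mathcal{M}_{\Sigma\setminus\{a_1\}},\ \max(z)\subseteq\mathscr{L}(a_1)\}$. For $S\subseteq\Sigma$, a clique of $S$ is a subset of $S$ of pairwise non-$\mathcal{R}$-related letters (empty set included); $\mu_S(X)=\sum_{\gamma\text{ clique of }S}(-1)^{|\gamma|}X^{|\gamma|}$, $\mu_\emptyset=1$. For $S\neq\emptyset$, $p_S$ is the unique root of smallest modulus of $\mu_S$ (real, $0<p_S\leqslant1$); $p_\emptyset=+\infty$. For $p\in(0,p_S)$, $\sum_{x\in\mathcal{M}_S}p^{|x|}=1/\mu_S(p)<\infty$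 and $B_{S,p}$ is the probability distribution on $\mathcal{M}_S$ with $B_{S,p}(\{x\})=\mu_S(p)p^{|x|}$. *)

theory Defs
  imports "HOL-Analysis.Analysis"
begin

text \<open>Traces are represented as equivalence classes of words (lists) under the
congruence generated by swapping adjacent independent letters, i.e. letters
a, b with (a,b) not in the dependence relation R.\<close>

definition swap_step :: "('a \<times> 'a) set \<Rightarrow> 'a list \<Rightarrow> 'a list \<Rightarrow> bool" where
  "swap_step R u v \<longleftrightarrow> (\<exists>x y a b. (a, b) \<notin> R \<and> u = x @ [a, b] @ y \<and> v = x @ [b, a] @ y)"

definition trace_eq :: "('a \<times> 'a) set \<Rightarrow> 'a list \<Rightarrow> 'a list \<Rightarrow> bool" where
  "trace_eq R = equivclp (swap_step R)"

definition trace_class :: "('a \<times> 'a) set \<Rightarrow> 'a list \<Rightarrow> 'a list set" where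
  "trace_class R w = {v. trace_eq R w v}"

definition traces :: "('a \<times> 'a) set \<Rightarrow> 'a set \<Rightarrow> 'a list set set" where
  "traces R S = {trace_class R w | w. set w \<subseteq> S}"

text \<open>Length of a trace (all representatives have the same length).\<close>
definition tlen :: "'a list set \<Rightarrow> nat" where
  "tlen x = length (SOME w. w \<in> x)"

definition tmax :: "('a \<times> 'a) set \<Rightarrow> 'a list set \<Rightarrow> 'a set" where
  "tmax R x = {a. \<exists>w. trace_class R (w @ [a]) = x}"

definition Lnb :: "('a \<times> 'a) set \<Rightarrow> 'a set \<Rightarrow> 'a \<Rightarrow> 'a set" where
  "Lnb R Sig a = {b \<in> Sig. (a, b) \<in> R}"

definition Pyr :: "('a \<times> 'a) set \<Rightarrow> 'a set \<Rightarrow> 'a \<Rightarrow> 'a list set set" where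
  "Pyr R Sig a1 = {trace_class R (w @ [a1]) | w.
      set w \<subseteq> Sig - {a1} \<and> tmax R (trace_class R w) \<subseteq> Lnb R Sig a1}"

definition is_clique :: "('a \<times> 'a) set \<Rightarrow> 'a set \<Rightarrow> 'a set \<Rightarrow> bool" where
  "is_clique R S \<gamma> \<longleftrightarrow> \<gamma> \<subseteq> S \<and> (\<forall>a\<in>\<gamma>. \<forall>b\<in>\<gamma>. a \<noteq> b \<longrightarrow> (a, b) \<notin> R)"

definition mu :: "('a \<times> 'a) set \<Rightarrow> 'a set \<Rightarrow> 'b::comm_ring_1 \<Rightarrow> 'b" where
  "mu R S X = (\<Sum>\<gamma> \<in> {\<gamma>. is_clique R S \<gamma>}. (-1) ^ card \<gamma> * X ^ card \<gamma>)"

text \<open>p_S: modulus of a root of smallest modulus of mu_S (meaningful for S nonempty).\<close>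
definition p_root :: "('a \<times> 'a) set \<Rightarrow> 'a set \<Rightarrow> real" where
  "p_root R S = Inf {norm z | z :: complex. mu R S z = 0}"

definition Bdist :: "('a \<times> 'a) set \<Rightarrow> 'a set \<Rightarrow> real \<Rightarrow> 'a list set set \<Rightarrow> real" where
  "Bdist R S p A = (\<Sum>\<^sub>\<infinity> x \<in> A. mu R S p * p ^ tlen x)"

end

theory Submission
  imports Defs "HOL-Complex_Analysis.Complex_Analysis"
begin

text \<open>Every trace over \<open>\<Sigma> - {a\<^sub>1}\<close> factors uniquely as \<open>z v\<close>, where all last letters of \<open>z\<close>
  lie in \<open>L(a\<^sub>1)\<close> and \<open>v\<close> is a trace over \<open>\<Sigma> - L(a\<^sub>1)\<close>; the traces \<open>z\<close> are exactly the
  bases of the pyramids \<open>z a\<^sub>1\<close>. Hence their generating series satisfies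
  \<open>Z(p) G\<^bsub>\<Sigma>-L(a\<^sub>1)\<^esub>(p) = G\<^bsub>\<Sigma>-{a\<^sub>1}\<^esub>(p)\<close>, where \<open>G\<^sub>S\<close> counts the traces over \<open>S\<close> by length.
  Moebius inversion for traces gives \<open>G\<^sub>S(p) \<mu>\<^sub>S(p) = 1\<close> whenever the series converges, and
  it converges for \<open>p < p\<^sub>\<Sigma>\<close> because \<open>1/\<mu>\<^sub>\<Sigma>\<close> is holomorphic on that disc with Taylor
  coefficients the trace counts, which dominate the counts over smaller alphabets. Therefore
  \<open>B(Pyr(a\<^sub>1)) = \<mu>\<^sub>\<Sigma>(p) p Z(p) = \<mu>\<^sub>\<Sigma>(p) p \<mu>\<^bsub>\<Sigma>-L(a\<^sub>1)\<^esub>(p) / \<mu>\<^bsub>\<Sigma>-{a\<^sub>1}\<^esub>(p)\<close>.\<close>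

section \<open>Trace equivalence\<close>

lemma equivclp_invariant:
  assumes "equivclp r u v" "\<And>u v. r u v \<Longrightarrow> f u = f v"
  shows "f u = f v"
  using assms(1) unfolding equivclp_def
proof (induction rule: rtranclp_induct)
  case (step y z)
  then show ?case using assms(2) by (auto simp: symclp_def)
qed simp

lemma equivclp_map:
  assumes "equivclp r u v" "\<And>u v. r u v \<Longrightarrow> f u = f v \<or> r (f u) (f v)"
  shows "equivclp r (f u) (f v)"
  using assms(1) unfolding equivclp_def
proof (induction rule: rtranclp_induct)
  case (step y z)
  have "f y = f z \<or> symclp r (f y) (f z)"
    using \<open>symclp r y z\<close> assms(2)[of y z] assms(2)[of z y] by (auto simp: symclp_def)
  then show ?case
    using step.IH by (metis rtranclp.rtrancl_into_rtrancl)
qed simp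

lemma trace_eq_refl [simp]: "trace_eq R u u"
  by (simp add: trace_eq_def)

lemma trace_eq_sym: "trace_eq R u v \<Longrightarrow> trace_eq R v u"
  by (simp add: trace_eq_def equivclp_sym)

lemma trace_eq_trans [trans]: "trace_eq R u v \<Longrightarrow> trace_eq R v w \<Longrightarrow> trace_eq R u w"
  unfolding trace_eq_def by (meson transpD transp_equivclp)

lemma trace_eq_swap: "(a, b) \<notin> R \<Longrightarrow> trace_eq R (x @ [a, b] @ y) (x @ [b, a] @ y)"
  unfolding trace_eq_def by (rule r_into_equivclp) (unfold swap_step_def, blast)

lemma trace_eq_length: "trace_eq R u v \<Longrightarrow> length u = length v"
  unfolding trace_eq_def by (erule equivclp_invariant) (auto simp: swap_step_def)

lemma trace_eq_set: "trace_eq R u v \<Longrightarrow> set u = set v"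
  unfolding trace_eq_def by (erule equivclp_invariant) (auto simp: swap_step_def)

lemma trace_eq_append_context:
  assumes "trace_eq R u u'"
  shows "trace_eq R (x @ u @ y) (x @ u' @ y)"
proof -
  have "equivclp (swap_step R) ((\<lambda>w. x @ w @ y) u) ((\<lambda>w. x @ w @ y) u')"
    using assms unfolding trace_eq_def
  proof (rule equivclp_map)
    fix u v assume "swap_step R u v"
    then obtain x' y' a b where "(a, b) \<notin> R" "u = x' @ [a, b] @ y'" "v = x' @ [b, a] @ y'"
      by (auto simp: swap_step_def)
    then have "swap_step R (x @ u @ y) (x @ v @ y)"
      unfolding swap_step_def
      by (intro exI[of _ "x @ x'"] exI[of _ "y' @ y"] exI[of _ a] exI[of _ b]) simp
    then show "x @ u @ y = x @ v @ y \<or> swap_step R (x @ u @ y) (x @ v @ y)" ..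
  qed
  then show ?thesis by (simp add: trace_eq_def)
qed

lemma trace_eq_append:
  assumes "trace_eq R u u'" "trace_eq R v v'"
  shows "trace_eq R (u @ v) (u' @ v')"
  using trace_eq_append_context[OF assms(1), of "[]" v] trace_eq_append_context[OF assms(2), of u' "[]"]
  by (auto intro: trace_eq_trans)

fun del_last :: "'a \<Rightarrow> 'a list \<Rightarrow> 'a list" where
  "del_last a [] = []"
| "del_last a (x # xs) = (if a \<in> set xs then x # del_last a xs else if x = a then xs else x # xs)"

lemma del_last_notin: "a \<notin> set u \<Longrightarrow> del_last a u = u"
  by (induction u) auto

lemma del_last_append: "del_last a (u @ v) = (if a \<in> set v then u @ del_last a v else del_last a u @ v)"
  by (induction u) (auto simp: del_last_notin)

lemma del_last_snoc [simp]: "del_last a (u @ [a]) = u"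
  by (simp add: del_last_append)

lemma del_last_snoc_other [simp]: "b \<noteq> a \<Longrightarrow> del_last a (u @ [b]) = del_last a u @ [b]"
  by (simp add: del_last_append)

lemma swap_step_del_last:
  assumes "swap_step R u v"
  shows "del_last a u = del_last a v \<or> swap_step R (del_last a u) (del_last a v)"
proof -
  obtain x y c d where cd: "(c, d) \<notin> R" "u = x @ [c, d] @ y" "v = x @ [d, c] @ y"
    using assms by (auto simp: swap_step_def)
  consider "a \<in> set y" | "a \<notin> set y" "a = c \<or> a = d" | "a \<notin> set y" "a \<noteq> c" "a \<noteq> d"
    by blast
  then show ?thesis
  proof cases
    case 1
    then show ?thesis using cd by (auto simp: del_last_append swap_step_def)
  next
    case 2
    then show ?thesis using cd by (auto simp: del_last_append)
  next
    case 3
    then have "del_last a u = del_last a x @ [c, d] @ y" "del_last a v = del_last a x @ [d, c] @ y"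
      using cd by (auto simp: del_last_append)
    then show ?thesis using cd(1) by (auto simp: swap_step_def)
  qed
qed

lemma trace_eq_del_last: "trace_eq R u v \<Longrightarrow> trace_eq R (del_last a u) (del_last a v)"
  unfolding trace_eq_def by (erule equivclp_map) (rule swap_step_del_last)

lemma trace_eq_snoc_cancel: "trace_eq R (u @ [a]) (v @ [a]) \<Longrightarrow> trace_eq R u v"
  using trace_eq_del_last[of R "u @ [a]" "v @ [a]" a] by simp

lemma trace_eq_append_cancel: "trace_eq R (u @ w) (v @ w) \<Longrightarrow> trace_eq R u v"
proof (induction w arbitrary: u v rule: rev_induct)
  case (snoc x xs)
  then show ?case using trace_eq_snoc_cancel[of R "u @ xs" x "v @ xs"] by simp
qed simp

lemma trace_eq_filter_dependent:
  assumes "sym R" "(a, b) \<in> R" "trace_eq R u v"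
  shows "filter (\<lambda>c. c = a \<or> c = b) u = filter (\<lambda>c. c = a \<or> c = b) v"
  using assms(3) unfolding trace_eq_def
proof (rule equivclp_invariant)
  fix u v assume "swap_step R u v"
  then obtain x y c d where cd: "(c, d) \<notin> R" "u = x @ [c, d] @ y" "v = x @ [d, c] @ y"
    by (auto simp: swap_step_def)
  have "\<not> ((c = a \<or> c = b) \<and> (d = a \<or> d = b) \<and> c \<noteq> d)"
    using assms(1,2) cd(1) unfolding sym_def by blast
  then show "filter (\<lambda>c. c = a \<or> c = b) u = filter (\<lambda>c. c = a \<or> c = b) v"
    using cd by auto
qed

text \<open>A special case of Levi's lemma for traces.\<close>
lemma trace_eq_snoc_snoc:
  assumes "sym R" "a \<noteq> b" "trace_eq R (y @ [a]) (z @ [b])"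
  shows "(a, b) \<notin> R \<and> trace_eq R y (del_last b y @ [b]) \<and> trace_eq R z (del_last b y @ [a])"
proof (intro conjI)
  show "(a, b) \<notin> R"
  proof
    assume "(a, b) \<in> R"
    from arg_cong[OF trace_eq_filter_dependent[OF assms(1) this assms(3)], of last]
    show False using assms(2) by simp
  qed
  have z: "trace_eq R (del_last b y @ [a]) z"
    using trace_eq_del_last[OF assms(3), of b] assms(2) by simp
  then show "trace_eq R z (del_last b y @ [a])" by (rule trace_eq_sym)
  have y: "trace_eq R y (del_last a z @ [b])"
    using trace_eq_del_last[OF assms(3), of a] assms(2) by simp
  have "trace_eq R (del_last a z) (del_last b y)"
    using trace_eq_del_last[OF trace_eq_sym[OF z], of a] by simp
  then have "trace_eq R (del_last a z @ [b]) (del_last b y @ [b])"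
    by (rule trace_eq_append[OF _ trace_eq_refl])
  with y show "trace_eq R y (del_last b y @ [b])"
    by (rule trace_eq_trans)
qed

lemma trace_eq_move_to_end:
  assumes "\<forall>c\<in>set ys. (a, c) \<notin> R"
  shows "trace_eq R (xs @ [a] @ ys) (xs @ ys @ [a])"
  using assms
proof (induction ys arbitrary: xs)
  case (Cons c ys)
  have "trace_eq R (xs @ [a, c] @ ys) (xs @ [c, a] @ ys)"
    using Cons.prems by (intro trace_eq_swap) simp
  also have "xs @ [c, a] @ ys = (xs @ [c]) @ [a] @ ys"
    by simp
  also have "trace_eq R \<dots> ((xs @ [c]) @ ys @ [a])"
    by (rule Cons.IH) (use Cons.prems in simp)
  finally show ?case by simp
qed simp

definition indep_set :: "('a \<times> 'a) set \<Rightarrow> 'a set \<Rightarrow> bool" where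
  "indep_set R A \<longleftrightarrow> (\<forall>a\<in>A. \<forall>b\<in>A. a \<noteq> b \<longrightarrow> (a, b) \<notin> R)"

lemma indep_set_subset: "indep_set R A \<Longrightarrow> B \<subseteq> A \<Longrightarrow> indep_set R B"
  by (auto simp: indep_set_def)

lemma is_clique_iff: "is_clique R S g \<longleftrightarrow> g \<subseteq> S \<and> indep_set R g"
  by (auto simp: is_clique_def indep_set_def)

lemma trace_eq_perm_independent:
  assumes "distinct l1" "distinct l2" "set l1 = set l2" "indep_set R (set l1)"
  shows "trace_eq R l1 l2"
  using assms
proof (induction l2 arbitrary: l1 rule: rev_induct)
  case (snoc a l2)
  then obtain xs ys where l1: "l1 = xs @ [a] @ ys"
    by (metis append_Cons append_Nil in_set_conv_decomp last_in_set snoc_eq_iff_butlast)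
  have "\<forall>c\<in>set ys. (a, c) \<notin> R"
    using snoc.prems l1 unfolding indep_set_def by auto
  then have "trace_eq R l1 ((xs @ ys) @ [a])"
    using trace_eq_move_to_end l1 by fastforce
  moreover have "trace_eq R (xs @ ys) l2"
    using snoc.prems l1 by (intro snoc.IH) (auto elim: indep_set_subset)
  ultimately show ?case
    by (metis trace_eq_append trace_eq_refl trace_eq_trans)
qed simp

section \<open>Last letters\<close>

definition last_letters :: "('a \<times> 'a) set \<Rightarrow> 'a list \<Rightarrow> 'a set" where
  "last_letters R w = {a. \<exists>u. trace_eq R (u @ [a]) w}"

lemma last_letters_trace_eq: "trace_eq R w w' \<Longrightarrow> last_letters R w = last_letters R w'"
  unfolding last_letters_def by (auto intro: trace_eq_trans dest: trace_eq_sym)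

lemma last_letters_subset_set: "last_letters R w \<subseteq> set w"
  unfolding last_letters_def using trace_eq_set by fastforce

lemma snoc_in_last_letters: "a \<in> last_letters R (w @ [a])"
  unfolding last_letters_def using trace_eq_refl by blast

lemma last_letters_Nil [simp]: "last_letters R [] = {}"
  using last_letters_subset_set[of R "[]"] by simp

lemma last_letters_eq_empty_iff: "last_letters R w = {} \<longleftrightarrow> w = []"
  using last_letters_subset_set[of R w] snoc_in_last_letters[of _ R "butlast w"]
  by (cases w rule: rev_cases) auto

lemma last_letters_independent: "sym R \<Longrightarrow> indep_set R (last_letters R w)"
  unfolding indep_set_def last_letters_def
  by (blast dest: trace_eq_snoc_snoc intro: trace_eq_trans trace_eq_sym)

lemma last_letters_append:
  assumes "sym R" "b \<in> last_letters R (x @ y)"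
  shows "b \<in> last_letters R x \<or> b \<in> last_letters R y"
proof -
  obtain t where "trace_eq R (x @ y) (t @ [b])"
    using assms(2) by (auto simp: last_letters_def dest: trace_eq_sym)
  then show ?thesis
  proof (induction y arbitrary: t rule: rev_induct)
    case Nil
    then show ?case by (auto simp: last_letters_def dest: trace_eq_sym)
  next
    case (snoc c y)
    show ?case
    proof (cases "c = b")
      case True
      then show ?thesis by (simp add: snoc_in_last_letters)
    next
      case False
      have "trace_eq R ((x @ y) @ [c]) (t @ [b])"
        using snoc.prems by simp
      from trace_eq_snoc_snoc[OF assms(1) False this]
      have cb: "(b, c) \<notin> R" and "trace_eq R (x @ y) (del_last b (x @ y) @ [b])"
        using assms(1) by (auto dest: symD)
      from snoc.IH[OF this(2)] show ?thesis
      proof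
        assume "b \<in> last_letters R y"
        then obtain y' where "trace_eq R (y' @ [b]) y"
          by (auto simp: last_letters_def)
        then have "trace_eq R (y' @ [b, c] @ []) (y @ [c])"
          using trace_eq_append[OF _ trace_eq_refl, of R "y' @ [b]" y "[c]"] by simp
        then have "trace_eq R ((y' @ [c]) @ [b]) (y @ [c])"
          using trace_eq_trans[OF trace_eq_sym[OF trace_eq_swap[OF cb, of y' "[]"]]] by simp
        then have "b \<in> last_letters R (y @ [c])"
          unfolding last_letters_def by blast
        then show ?thesis ..
      qed simp
    qed
  qed
qed

definition enum_set :: "'a set \<Rightarrow> 'a list" where
  "enum_set A = (SOME l. distinct l \<and> set l = A)"

lemma enum_set: "finite A \<Longrightarrow> distinct (enum_set A) \<and> set (enum_set A) = A"
  unfolding enum_set_def by (rule someI_ex) (metis finite_distinct_list)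

lemma enum_set_empty [simp]: "enum_set {} = []"
  using enum_set[of "{} :: 'a set"] by simp

lemma length_enum_set: "finite A \<Longrightarrow> length (enum_set A) = card A"
  using enum_set[of A] distinct_card[of "enum_set A"] by simp

lemma trace_eq_enum_set_insert:
  assumes "finite F" "a \<notin> F" "indep_set R (insert a F)"
  shows "trace_eq R (enum_set F @ [a]) (enum_set (insert a F))"
  using assms enum_set[of F] enum_set[of "insert a F"]
  by (intro trace_eq_perm_independent) auto

lemma suffix_subset_last_letters:
  assumes "finite g" "indep_set R g" "trace_eq R (u @ enum_set g) w"
  shows "g \<subseteq> last_letters R w"
proof
  fix a assume "a \<in> g"
  then have "trace_eq R (enum_set (g - {a}) @ [a]) (enum_set g)"
    using trace_eq_enum_set_insert[of "g - {a}" a R] assms(1,2) by (simp add: insert_absorb)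
  then have "trace_eq R ((u @ enum_set (g - {a})) @ [a]) w"
    using trace_eq_trans[OF trace_eq_append[OF trace_eq_refl] assms(3)] by simp
  then show "a \<in> last_letters R w"
    unfolding last_letters_def by blast
qed

lemma last_letters_suffix:
  assumes "sym R" "G \<subseteq> last_letters R w"
  shows "\<exists>x. trace_eq R (x @ enum_set G) w"
proof -
  have "finite G"
    by (rule finite_subset[OF subset_trans[OF assms(2) last_letters_subset_set]]) simp
  then show ?thesis
    using assms(2)
  proof (induction G rule: finite_induct)
    case empty
    show ?case by (intro exI[of _ w]) simp
  next
    case (insert a F)
    then obtain x where x: "trace_eq R (x @ enum_set F) w" by auto
    have indep: "indep_set R (insert a F)"
      using last_letters_independent[OF assms(1)] insert.prems by (rule indep_set_subset)
    have "a \<in> last_letters R (x @ enum_set F)"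
      using insert.prems unfolding last_letters_trace_eq[OF x] by simp
    moreover have "a \<notin> last_letters R (enum_set F)"
      using last_letters_subset_set[of R "enum_set F"] enum_set[OF insert.hyps(1)] insert.hyps(2)
      by auto
    ultimately have "a \<in> last_letters R x"
      using last_letters_append[OF assms(1)] by metis
    then obtain x' where x': "trace_eq R (x' @ [a]) x"
      unfolding last_letters_def by blast
    have "\<forall>c\<in>set (enum_set F). (a, c) \<notin> R"
      using indep insert.hyps enum_set[OF insert.hyps(1)] by (auto simp: indep_set_def)
    have "trace_eq R (x' @ enum_set (insert a F)) (x' @ enum_set F @ [a])"
      using trace_eq_append[OF trace_eq_refl trace_eq_sym[OF trace_eq_enum_set_insert[OF insert.hyps indep]]]
      by simp
    also have "trace_eq R \<dots> (x' @ [a] @ enum_set F)"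
      by (rule trace_eq_sym, rule trace_eq_move_to_end) fact
    also have "trace_eq R \<dots> (x @ enum_set F)"
      using trace_eq_append[OF x' trace_eq_refl] by simp
    also note x
    finally show ?case ..
  qed
qed

section \<open>Counting traces\<close>

lemma trace_class_eq_iff: "trace_class R u = trace_class R v \<longleftrightarrow> trace_eq R u v"
proof
  assume "trace_class R u = trace_class R v"
  then show "trace_eq R u v" by (auto simp: trace_class_def)
next
  assume "trace_eq R u v"
  then show "trace_class R u = trace_class R v"
    by (auto simp: trace_class_def intro: trace_eq_trans trace_eq_sym)
qed

lemma some_in_trace_class: "trace_eq R u (SOME w. w \<in> trace_class R u)"
proof -
  have "(SOME w. w \<in> trace_class R u) \<in> trace_class R u"
    by (rule someI[of _ u]) (simp add: trace_class_def)
  then show ?thesis by (simp add: trace_class_def)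
qed

lemma tlen_trace_class [simp]: "tlen (trace_class R w) = length w"
  unfolding tlen_def using trace_eq_length[OF some_in_trace_class] by metis

lemma tmax_trace_class [simp]: "tmax R (trace_class R w) = last_letters R w"
  by (simp add: tmax_def last_letters_def trace_class_eq_iff)

definition trace_append :: "('a \<times> 'a) set \<Rightarrow> 'a list set \<Rightarrow> 'a list set \<Rightarrow> 'a list set" where
  "trace_append R x y = trace_class R ((SOME w. w \<in> x) @ (SOME w. w \<in> y))"

lemma trace_append_class [simp]:
  "trace_append R (trace_class R u) (trace_class R v) = trace_class R (u @ v)"
  unfolding trace_append_def trace_class_eq_iff
  by (rule trace_eq_sym, rule trace_eq_append[OF some_in_trace_class some_in_trace_class])

lemma inj_on_trace_append_right: "inj_on (\<lambda>x. trace_append R x (trace_class R w)) (range (trace_class R))"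
proof (rule inj_onI)
  fix x y
  assume "x \<in> range (trace_class R)" "y \<in> range (trace_class R)"
    and eq: "trace_append R x (trace_class R w) = trace_append R y (trace_class R w)"
  then obtain u v where uv: "x = trace_class R u" "y = trace_class R v"
    by blast
  then have "trace_eq R (u @ w) (v @ w)"
    using eq by (simp add: trace_class_eq_iff)
  then show "x = y"
    using uv by (simp add: trace_class_eq_iff trace_eq_append_cancel)
qed

definition traces_of_length :: "('a \<times> 'a) set \<Rightarrow> 'a set \<Rightarrow> nat \<Rightarrow> 'a list set set" where
  "traces_of_length R S n = {trace_class R w | w. set w \<subseteq> S \<and> length w = n}"

definition trace_count :: "('a \<times> 'a) set \<Rightarrow> 'a set \<Rightarrow> nat \<Rightarrow> nat" where
  "trace_count R S n = card (traces_of_length R S n)"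

lemma traces_of_length_image:
  "traces_of_length R S n = trace_class R ` {w. set w \<subseteq> S \<and> length w = n}"
  by (auto simp: traces_of_length_def)

lemma finite_traces_of_length: "finite S \<Longrightarrow> finite (traces_of_length R S n)"
  unfolding traces_of_length_image by (simp add: finite_lists_length_eq)

lemma traces_of_length_mono: "S \<subseteq> S' \<Longrightarrow> traces_of_length R S n \<subseteq> traces_of_length R S' n"
  by (auto simp: traces_of_length_def)

lemma trace_count_mono: "finite S' \<Longrightarrow> S \<subseteq> S' \<Longrightarrow> trace_count R S n \<le> trace_count R S' n"
  unfolding trace_count_def by (intro card_mono finite_traces_of_length traces_of_length_mono)

lemma sum_Pow_alternating:
  assumes "finite A"
  shows "(\<Sum>B\<in>Pow A. (-1) ^ card B) = (if A = {} then 1 else (0::'b::ring_1))"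
proof (cases "A = {}")
  case False
  then have "card {B. B \<subseteq> A \<and> even (card B)} = card {B. B \<subseteq> A \<and> odd (card B)}"
    using card_subsupersets_even_odd[OF assms, of "{}"] by auto
  then show ?thesis
    using sum_alternating_cancels[of "Pow A" card] assms False by (simp add: Pow_def)
qed simp

lemma traces_of_length_cases:
  assumes "t \<in> traces_of_length R S n"
  obtains w where "t = trace_class R w" "set w \<subseteq> S" "length w = n"
  using assms unfolding traces_of_length_def by blast

lemma finite_tmax: "t \<in> traces_of_length R S n \<Longrightarrow> finite (tmax R t)"
  by (erule traces_of_length_cases) (simp add: finite_subset[OF last_letters_subset_set])

lemma card_le_length_if_subset_tmax:
  assumes "t \<in> traces_of_length R S n" "g \<subseteq> tmax R t"
  shows "card g \<le> n"
proof -
  obtain w where "t = trace_class R w" "length w = n"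
    using assms(1) by (rule traces_of_length_cases)
  then have "g \<subseteq> set w"
    using assms(2) last_letters_subset_set by fastforce
  then show ?thesis
    using \<open>length w = n\<close> card_mono[of "set w" g] card_length[of w] by simp
qed

lemma traces_with_last_letters_eq_image:
  assumes "sym R" "finite S" "is_clique R S g" "card g \<le> n"
  shows "{t \<in> traces_of_length R S n. g \<subseteq> tmax R t}
           = (\<lambda>x. trace_append R x (trace_class R (enum_set g))) ` traces_of_length R S (n - card g)"
    (is "?A = ?f ` ?B")
proof (intro equalityI subsetI)
  have g: "finite g" "g \<subseteq> S" "indep_set R g"
    using assms(2,3) by (auto simp: is_clique_iff intro: finite_subset)
  {
    fix t assume "t \<in> ?A"
    then obtain w where w: "t = trace_class R w" "set w \<subseteq> S" "length w = n" "g \<subseteq> last_letters R w"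
      by (auto elim: traces_of_length_cases)
    then obtain x where x: "trace_eq R (x @ enum_set g) w"
      using last_letters_suffix[OF assms(1)] by blast
    have "length x = n - card g" "set x \<subseteq> S"
      using trace_eq_length[OF x] trace_eq_set[OF x] w length_enum_set[OF g(1)] by auto
    moreover have "t = ?f (trace_class R x)"
      using x w(1) by (simp add: trace_class_eq_iff trace_eq_sym)
    ultimately show "t \<in> ?f ` ?B"
      unfolding traces_of_length_def by blast
  next
    fix t assume "t \<in> ?f ` ?B"
    then obtain x where x: "t = trace_class R (x @ enum_set g)" "set x \<subseteq> S" "length x = n - card g"
      by (auto simp: traces_of_length_def)
    then have "set (x @ enum_set g) \<subseteq> S" "length (x @ enum_set g) = n"
      using g assms(4) enum_set[OF g(1)] length_enum_set[OF g(1)] by auto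
    moreover have "g \<subseteq> last_letters R (x @ enum_set g)"
      by (rule suffix_subset_last_letters[OF g(1,3) trace_eq_refl])
    ultimately have "t \<in> traces_of_length R S n" "g \<subseteq> tmax R t"
      unfolding x(1) traces_of_length_def by (blast, simp)
    then show "t \<in> ?A"
      by simp
  }
qed

lemma card_traces_with_last_letters:
  assumes "sym R" "finite S" "is_clique R S g"
  shows "card {t \<in> traces_of_length R S n. g \<subseteq> tmax R t}
           = (if card g \<le> n then trace_count R S (n - card g) else 0)"
proof (cases "card g \<le> n")
  case True
  have "inj_on (\<lambda>x. trace_append R x (trace_class R (enum_set g))) (traces_of_length R S (n - card g))"
    by (rule inj_on_subset[OF inj_on_trace_append_right]) (auto simp: traces_of_length_def)
  then show ?thesis
    unfolding traces_with_last_letters_eq_image[OF assms True] trace_count_def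
    using True by (simp add: card_image)
next
  case False
  then have empty: "{t \<in> traces_of_length R S n. g \<subseteq> tmax R t} = {}"
    using card_le_length_if_subset_tmax by blast
  show ?thesis
    unfolding empty using False by simp
qed

text \<open>The combinatorial form of \<open>G_S \<mu>_S = 1\<close>: a trace is counted with the sign \<open>(-1)^|g|\<close>
  for every subset \<open>g\<close> of its (pairwise independent) last letters, so only the empty trace
  survives.\<close>
lemma trace_count_mobius:
  assumes "finite S" "sym R"
  shows "(\<Sum>g | is_clique R S g. (-1) ^ card g *
            (if card g \<le> n then of_nat (trace_count R S (n - card g)) else 0))
         = (if n = 0 then 1 else (0::'b::comm_ring_1))"
proof -
  let ?T = "traces_of_length R S n" and ?C = "{g. is_clique R S g}"
  have fin: "finite ?T" "finite ?C"
    using assms(1) finite_traces_of_length by (auto intro: finite_subset[of _ "Pow S"] simp: is_clique_def)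
  have cliques: "{g \<in> ?C. g \<subseteq> tmax R t} = Pow (tmax R t)" if t: "t \<in> ?T" for t
  proof -
    obtain w where "t = trace_class R w" "set w \<subseteq> S"
      using t by (rule traces_of_length_cases)
    then show ?thesis
      using last_letters_subset_set[of R w] indep_set_subset[OF last_letters_independent[OF assms(2)]]
      by (auto simp: is_clique_iff)
  qed
  have "(\<Sum>g\<in>?C. (-1) ^ card g * (if card g \<le> n then of_nat (trace_count R S (n - card g)) else 0))
      = (\<Sum>g\<in>?C. \<Sum>t\<in>{t \<in> ?T. g \<subseteq> tmax R t}. (-1) ^ card g :: 'b)"
    by (intro sum.cong) (auto simp: card_traces_with_last_letters[OF assms(2,1)] mult.commute)
  also have "\<dots> = (\<Sum>t\<in>?T. \<Sum>g\<in>{g \<in> ?C. g \<subseteq> tmax R t}. (-1) ^ card g)"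
    by (rule sum.swap_restrict[OF fin(2,1)])
  also have "\<dots> = (\<Sum>t\<in>?T. if tmax R t = {} then 1 else 0)"
    using cliques by (intro sum.cong) (simp_all add: sum_Pow_alternating finite_tmax)
  also have "\<dots> = (if n = 0 then 1 else 0)"
  proof -
    have "tmax R t = {} \<longleftrightarrow> n = 0" if "t \<in> ?T" for t
      using that by (auto simp: traces_of_length_def last_letters_eq_empty_iff)
    moreover have "traces_of_length R S 0 = {trace_class R []}"
      by (auto simp: traces_of_length_def)
    ultimately show ?thesis by simp
  qed
  finally show ?thesis by simp
qed

section \<open>Generating series\<close>

lemma trace_series_times_mu:
  fixes p :: real
  assumes "finite S" "sym R" "summable (\<lambda>n. real (trace_count R S n) * p ^ n)"
  shows "(\<Sum>n. real (trace_count R S n) * p ^ n) * mu R S p = 1"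
proof -
  define G where "G = (\<Sum>n. real (trace_count R S n) * p ^ n)"
  define e where "e g m = (-1) ^ card g * (if card g \<le> m then real (trace_count R S (m - card g)) else 0) * p ^ m"
    for g :: "'a set" and m
  have "e g sums ((-1) ^ card g * p ^ card g * G)" for g
  proof -
    have "(\<lambda>i. e g (i + card g)) = (\<lambda>i. ((-1) ^ card g * p ^ card g) * (real (trace_count R S i) * p ^ i))"
      unfolding e_def by (auto simp: power_add)
    then have "(\<lambda>i. e g (i + card g)) sums ((-1) ^ card g * p ^ card g * G)"
      using sums_mult[OF summable_sums[OF assms(3)]] by (simp add: G_def)
    then show ?thesis
      using sums_iff_shift[of "e g" "card g"] by (simp add: e_def)
  qed
  then have "(\<lambda>m. \<Sum>g | is_clique R S g. e g m) sums (\<Sum>g | is_clique R S g. (-1) ^ card g * p ^ card g * G)"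
    by (rule sums_sum)
  moreover have "(\<Sum>g | is_clique R S g. e g m) = (if m = 0 then 1 else 0)" for m
    using trace_count_mobius[OF assms(1,2), of m, where 'b=real]
    by (simp add: e_def sum_distrib_right[symmetric])
  ultimately have "(\<lambda>m. if m = 0 then 1 else 0 :: real) sums (G * mu R S p)"
    by (simp add: mu_def sum_distrib_left mult_ac)
  moreover have "(\<lambda>m. if m = 0 then 1 else 0 :: real) sums 1"
    using sums_single[of 0 "\<lambda>_. 1 :: real"] by simp
  ultimately show ?thesis
    unfolding G_def using sums_unique2 by blast
qed

definition mu_fps :: "('a \<times> 'a) set \<Rightarrow> 'a set \<Rightarrow> complex fps" where
  "mu_fps R S = (\<Sum>g | is_clique R S g. fps_const ((-1) ^ card g) * fps_X ^ card g)"

lemma mu_has_fps_expansion: "(\<lambda>z. mu R S z) has_fps_expansion mu_fps R S"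
  unfolding mu_def mu_fps_def
  by (intro has_fps_expansion_sum has_fps_expansion_cmult_left has_fps_expansion_fps_X_power)

lemma trace_count_fps_times_mu_fps:
  assumes "finite S" "sym R"
  shows "Abs_fps (\<lambda>n. of_nat (trace_count R S n)) * mu_fps R S = 1"
proof (rule fps_ext)
  fix n
  let ?C = "Abs_fps (\<lambda>n. of_nat (trace_count R S n)) :: complex fps"
  have "?C * mu_fps R S = (\<Sum>g | is_clique R S g. fps_const ((-1) ^ card g) * (?C * fps_X ^ card g))"
    unfolding mu_fps_def by (simp add: sum_distrib_left mult_ac)
  then have "(?C * mu_fps R S) $ n = (\<Sum>g | is_clique R S g. (-1) ^ card g * (?C * fps_X ^ card g) $ n)"
    by (simp add: fps_sum_nth)
  also have "\<dots> = (\<Sum>g | is_clique R S g.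
      (-1) ^ card g * (if card g \<le> n then of_nat (trace_count R S (n - card g)) else 0))"
    by (intro sum.cong) (simp_all add: fps_X_power_mult_right_nth)
  also have "\<dots> = 1 $ n"
    by (simp add: trace_count_mobius[OF assms])
  finally show "(?C * mu_fps R S) $ n = 1 $ n" .
qed

lemma mu_nonzero_below_p_root:
  assumes "p < p_root R S"
  obtains r where "p < r" "\<And>z::complex. norm z < r \<Longrightarrow> mu R S z \<noteq> 0"
proof (cases "{norm z | z :: complex. mu R S z = 0} = {}")
  case True
  show ?thesis by (rule that[of "p + 1"]) (use True in auto)
next
  case False
  have "p_root R S \<le> norm z" if "mu R S z = 0" for z :: complex
    unfolding p_root_def using that by (intro cInf_lower) (auto intro: bdd_belowI[of _ 0])
  then show ?thesis
    using that[OF assms] by force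
qed

text \<open>Below \<open>p_\<Sigma>\<close> the function \<open>1/\<mu>_\<Sigma>\<close> is holomorphic, and its Taylor series at \<open>0\<close>
  is the counting series of traces.\<close>
lemma summable_trace_count:
  fixes p :: real
  assumes "finite S" "sym R" "0 \<le> p" "p < p_root R S"
  shows "summable (\<lambda>n. real (trace_count R S n) * p ^ n)"
proof -
  define C :: "complex fps" where "C = Abs_fps (\<lambda>n. of_nat (trace_count R S n))"
  have CM: "C * mu_fps R S = 1"
    unfolding C_def by (rule trace_count_fps_times_mu_fps[OF assms(1,2)])
  then have "fps_nth (mu_fps R S) 0 \<noteq> 0"
    by (metis fps_mult_nth_0 fps_one_nth mult_zero_right zero_neq_one)
  moreover have "inverse (mu_fps R S) = C"
    by (rule fps_inverse_unique) (simp add: CM mult.commute)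
  ultimately have expansion: "(\<lambda>z. inverse (mu R S z)) has_fps_expansion C"
    using has_fps_expansion_inverse[OF mu_has_fps_expansion] by metis
  obtain r where r: "p < r" "\<And>z::complex. norm z < r \<Longrightarrow> mu R S z \<noteq> 0"
    using mu_nonzero_below_p_root[OF assms(4)] by blast
  have "(\<lambda>z. inverse (mu R S z)) holomorphic_on ball 0 r"
    unfolding mu_def by (intro holomorphic_intros) (use r(2) in \<open>auto simp: mu_def\<close>)
  then have "(\<lambda>n. (deriv ^^ n) (\<lambda>z. inverse (mu R S z)) 0 / fact n * (complex_of_real p - 0) ^ n)
      sums inverse (mu R S (complex_of_real p))"
    by (rule holomorphic_power_series) (use r(1) assms(3) in auto)
  then have "(\<lambda>n. complex_of_real (real (trace_count R S n) * p ^ n))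
      sums inverse (mu R S (complex_of_real p))"
    using fps_nth_fps_expansion[OF expansion] by (simp add: C_def)
  then show ?thesis
    using sums_summable summable_complex_of_real by blast
qed

lemma summable_power_series_dominated:
  fixes p :: real
  assumes "\<And>n. f n \<le> g n" "0 \<le> p" "summable (\<lambda>n. real (g n) * p ^ n)"
  shows "summable (\<lambda>n. real (f n) * p ^ n)"
  by (rule summable_comparison_test[OF _ assms(3)]) (use assms(1,2) in \<open>auto intro!: mult_right_mono\<close>)

lemma summable_trace_count_subset:
  fixes p :: real
  assumes "finite Sig" "sym R" "S \<subseteq> Sig" "0 \<le> p" "p < p_root R Sig"
  shows "summable (\<lambda>n. real (trace_count R S n) * p ^ n)"
  by (rule summable_power_series_dominated[OF trace_count_mono[OF assms(1,3)] assms(4)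
        summable_trace_count[OF assms(1,2,4,5)]])

lemma infsum_power_by_size:
  fixes p :: real and size :: "'b \<Rightarrow> nat"
  assumes "\<And>n. finite {x \<in> A. size x = n}" "0 \<le> p"
    and "summable (\<lambda>n. real (card {x \<in> A. size x = n}) * p ^ n)"
  shows "(\<Sum>\<^sub>\<infinity>x\<in>A. p ^ size x) = (\<Sum>n. real (card {x \<in> A. size x = n}) * p ^ n)"
proof -
  define B where "B n = {x \<in> A. size x = n}" for n
  define c where "c = (\<lambda>n. real (card (B n)) * p ^ n)"
  have levels: "((\<lambda>x. p ^ size x) has_sum c n) (B n)" for n
    using assms(1) by (intro has_sum_finiteI) (auto simp: B_def c_def)
  have series: "(c has_sum (\<Sum>n. c n)) UNIV"
    using assms(2,3) by (intro sums_nonneg_imp_has_sum summable_sums) (auto simp: B_def c_def)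
  have "((\<lambda>(n, x). p ^ size x) has_sum (\<Sum>n. c n)) (Sigma UNIV B)"
  proof (rule has_sum_SigmaI)
    show "(\<lambda>(n, x). p ^ size x) summable_on Sigma UNIV B"
      using levels series assms(2) by (intro summable_on_SigmaI[where g=c]) (auto dest: has_sum_imp_summable)
  qed (use levels series in auto)
  moreover have "bij_betw (\<lambda>x. (size x, x)) A (Sigma UNIV B)"
    by (rule bij_betwI[where g=snd]) (auto simp: B_def)
  ultimately have "((\<lambda>x. p ^ size x) has_sum (\<Sum>n. c n)) A"
    using has_sum_reindex_bij_betw[of "\<lambda>x. (size x, x)" A "Sigma UNIV B" "\<lambda>(n, x). p ^ size x"] by simp
  then show ?thesis
    unfolding c_def B_def by (rule infsumI)
qed

section \<open>Factorization of traces\<close>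

lemma trace_factorization_exists:
  "\<exists>z v. last_letters R z \<subseteq> L \<and> set v \<inter> L = {} \<and> trace_eq R (z @ v) u"
proof (induction "length u" arbitrary: u rule: less_induct)
  case less
  show ?case
  proof (cases "last_letters R u \<subseteq> L")
    case True
    then show ?thesis by (intro exI[of _ u] exI[of _ "[]"]) simp
  next
    case False
    then obtain b u' where b: "b \<notin> L" "trace_eq R (u' @ [b]) u"
      unfolding last_letters_def by blast
    have "length u' < length u"
      using trace_eq_length[OF b(2)] by simp
    then obtain z v where zv: "last_letters R z \<subseteq> L" "set v \<inter> L = {}" "trace_eq R (z @ v) u'"
      using less.hyps by blast
    have "trace_eq R (z @ v @ [b]) u"
      using trace_eq_trans[OF trace_eq_append[OF zv(3) trace_eq_refl] b(2)] by simp
    then show ?thesis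
      using zv b(1) by (intro exI[of _ z] exI[of _ "v @ [b]"]) auto
  qed
qed

lemma trace_factorization_unique:
  assumes "sym R" "set v \<inter> L = {}" "set v' \<inter> L = {}"
    and "last_letters R z \<subseteq> L" "last_letters R z' \<subseteq> L" "trace_eq R (z @ v) (z' @ v')"
  shows "trace_eq R z z' \<and> trace_eq R v v'"
  using assms(2-)
proof (induction "length v + length v'" arbitrary: v v' z z' rule: less_induct)
  case less
  show ?case
  proof (cases "v = []")
    case True
    have "v' = []"
    proof (rule ccontr)
      assume "v' \<noteq> []"
      then have "last v' \<in> last_letters R (z' @ v')"
        using snoc_in_last_letters[of "last v'" R "z' @ butlast v'"] by simp
      also have "last_letters R (z' @ v') = last_letters R z"
        using last_letters_trace_eq[OF less.prems(5)] True by simp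
      finally have "last v' \<in> L"
        using less.prems(3) by blast
      moreover have "last v' \<in> set v'"
        using \<open>v' \<noteq> []\<close> by simp
      ultimately show False
        using less.prems(2) by blast
    qed
    then show ?thesis using True less.prems(5) by simp
  next
    case False
    then obtain v0 b where v: "v = v0 @ [b]"
      by (metis rev_exhaust)
    have "b \<in> last_letters R (z' @ v')"
      using last_letters_trace_eq[OF less.prems(5)] snoc_in_last_letters[of b R "z @ v0"] v by simp
    moreover have "b \<notin> last_letters R z'"
      using less.prems(1,4) v by auto
    ultimately have "b \<in> last_letters R v'"
      using last_letters_append[OF assms(1)] by metis
    then obtain y' where y': "trace_eq R (y' @ [b]) v'"
      unfolding last_letters_def by blast
    have "trace_eq R ((z @ v0) @ [b]) ((z' @ y') @ [b])"
      using trace_eq_trans[OF less.prems(5) trace_eq_append[OF trace_eq_refl trace_eq_sym[OF y']]] v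
      by simp
    then have "trace_eq R (z @ v0) (z' @ y')"
      by (rule trace_eq_snoc_cancel)
    moreover have "length v0 + length y' < length v + length v'"
      using trace_eq_length[OF y'] v by simp
    moreover have "set v0 \<inter> L = {}" "set y' \<inter> L = {}"
      using trace_eq_set[OF y'] less.prems(1,2) v by auto
    ultimately have "trace_eq R z z' \<and> trace_eq R v0 y'"
      using less.hyps less.prems(3,4) by blast
    moreover have "trace_eq R (v0 @ [b]) v'"
      using trace_eq_trans[OF trace_eq_append[OF _ trace_eq_refl] y'] calculation by blast
    ultimately show ?thesis
      using v by blast
  qed
qed

definition traces_max_within :: "('a \<times> 'a) set \<Rightarrow> 'a set \<Rightarrow> 'a set \<Rightarrow> nat \<Rightarrow> 'a list set set" where
  "traces_max_within R A L n = {t \<in> traces_of_length R A n. tmax R t \<subseteq> L}"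

lemma card_traces_max_within_le:
  "finite A \<Longrightarrow> card (traces_max_within R A L n) \<le> trace_count R A n"
  unfolding traces_max_within_def trace_count_def by (intro card_mono finite_traces_of_length) auto

lemma summable_traces_max_within:
  fixes p :: real
  assumes "finite A" "0 \<le> p" "summable (\<lambda>n. real (trace_count R A n) * p ^ n)"
  shows "summable (\<lambda>n. real (card (traces_max_within R A L n)) * p ^ n)"
  by (rule summable_power_series_dominated[OF card_traces_max_within_le[OF assms(1)] assms(2,3)])

definition trace_factorizations :: "('a \<times> 'a) set \<Rightarrow> 'a set \<Rightarrow> 'a set \<Rightarrow> nat \<Rightarrow> (nat \<times> 'a list set \<times> 'a list set) set" where
  "trace_factorizations R A L n = {(length z, trace_class R z, trace_class R v) | z v.
     set z \<subseteq> A \<and> last_letters R z \<subseteq> L \<and> set v \<subseteq> A - L \<and> length z + length v = n}"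

lemma Sigma_traces_max_within_eq:
  "(SIGMA k:{..n}. traces_max_within R A L k \<times> traces_of_length R (A - L) (n - k))
     = trace_factorizations R A L n"
  (is "?D = ?F")
proof (intro equalityI subsetI)
  fix q assume "q \<in> ?D"
  then obtain k z v where "q = (k, trace_class R z, trace_class R v)" "k \<le> n"
    "set z \<subseteq> A" "length z = k" "last_letters R z \<subseteq> L" "set v \<subseteq> A - L" "length v = n - k"
    unfolding traces_max_within_def traces_of_length_def by auto
  then show "q \<in> ?F"
    unfolding trace_factorizations_def by (intro CollectI exI[of _ z] exI[of _ v]) simp
next
  fix q assume "q \<in> ?F"
  then obtain z v where q: "q = (length z, trace_class R z, trace_class R v)"
    and zv: "set z \<subseteq> A" "last_letters R z \<subseteq> L" "set v \<subseteq> A - L" "length z + length v = n"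
    unfolding trace_factorizations_def by blast
  have "trace_class R z \<in> traces_of_length R A (length z)"
    "trace_class R v \<in> traces_of_length R (A - L) (n - length z)"
    unfolding traces_of_length_def using zv by (blast, simp add: exI[of _ v])
  then show "q \<in> ?D"
    using q zv by (simp add: traces_max_within_def)
qed

lemma inj_on_trace_factorizations:
  assumes "sym R"
  shows "inj_on (\<lambda>(k, z, v). trace_append R z v) (trace_factorizations R A L n)"
proof (rule inj_onI)
  fix q q' assume "q \<in> trace_factorizations R A L n" "q' \<in> trace_factorizations R A L n"
    and eq: "(\<lambda>(k, z, v). trace_append R z v) q = (\<lambda>(k, z, v). trace_append R z v) q'"
  then obtain z v z' v' where q: "q = (length z, trace_class R z, trace_class R v)"
      "last_letters R z \<subseteq> L" "set v \<inter> L = {}"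
    and q': "q' = (length z', trace_class R z', trace_class R v')"
      "last_letters R z' \<subseteq> L" "set v' \<inter> L = {}"
    unfolding trace_factorizations_def by blast
  have "trace_eq R (z @ v) (z' @ v')"
    using eq q(1) q'(1) by (simp add: trace_class_eq_iff)
  then have "trace_eq R z z' \<and> trace_eq R v v'"
    using trace_factorization_unique[OF assms q(3) q'(3) q(2) q'(2)] by blast
  then show "q = q'"
    using q(1) q'(1) trace_eq_length[of R z z'] by (simp add: trace_class_eq_iff)
qed

lemma image_trace_factorizations:
  "(\<lambda>(k, z, v). trace_append R z v) ` trace_factorizations R A L n = traces_of_length R A n"
proof (intro equalityI subsetI)
  fix t assume "t \<in> (\<lambda>(k, z, v). trace_append R z v) ` trace_factorizations R A L n"
  then obtain z v where "t = trace_class R (z @ v)" "set z \<subseteq> A" "set v \<subseteq> A - L"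
      "length z + length v = n"
    unfolding trace_factorizations_def by auto
  then show "t \<in> traces_of_length R A n"
    unfolding traces_of_length_def by (intro CollectI exI[of _ "z @ v"]) auto
next
  fix t assume "t \<in> traces_of_length R A n"
  then obtain u where u: "t = trace_class R u" "set u \<subseteq> A" "length u = n"
    by (rule traces_of_length_cases)
  obtain z v where zv: "last_letters R z \<subseteq> L" "set v \<inter> L = {}" "trace_eq R (z @ v) u"
    using trace_factorization_exists[where R=R and L=L and u=u] by blast
  have "set z \<subseteq> A" "set v \<subseteq> A - L" "length z + length v = n"
    using trace_eq_set[OF zv(3)] trace_eq_length[OF zv(3)] u(2,3) zv(2) by auto
  moreover have "t = trace_append R (trace_class R z) (trace_class R v)"
    using zv(3) u(1) by (simp add: trace_class_eq_iff trace_eq_sym)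
  ultimately show "t \<in> (\<lambda>(k, z, v). trace_append R z v) ` trace_factorizations R A L n"
    unfolding trace_factorizations_def using zv(1)
    by (intro image_eqI[where x="(length z, trace_class R z, trace_class R v)"]) auto
qed

lemma trace_count_factorization:
  assumes "finite A" "sym R"
  shows "trace_count R A n
    = (\<Sum>k\<le>n. card (traces_max_within R A L k) * trace_count R (A - L) (n - k))"
proof -
  have "trace_count R A n
      = card (SIGMA k:{..n}. traces_max_within R A L k \<times> traces_of_length R (A - L) (n - k))"
    unfolding trace_count_def Sigma_traces_max_within_eq image_trace_factorizations[of R A L n, symmetric]
    by (rule card_image[OF inj_on_trace_factorizations[OF assms(2)]])
  also have "\<dots> = (\<Sum>k\<le>n. card (traces_max_within R A L k \<times> traces_of_length R (A - L) (n - k)))"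
    using assms(1) by (intro card_SigmaI) (auto simp: traces_max_within_def finite_traces_of_length)
  finally show ?thesis
    by (simp add: card_cartesian_product trace_count_def)
qed

lemma trace_series_factorization:
  fixes p :: real
  assumes "finite A" "sym R" "0 \<le> p" "summable (\<lambda>n. real (trace_count R A n) * p ^ n)"
  shows "(\<Sum>n. real (card (traces_max_within R A L n)) * p ^ n) * (\<Sum>n. real (trace_count R (A - L) n) * p ^ n)
         = (\<Sum>n. real (trace_count R A n) * p ^ n)"
proof -
  have "summable (\<lambda>n. real (card (traces_max_within R A L n)) * p ^ n)"
    by (rule summable_traces_max_within[OF assms(1,3,4)])
  moreover have "summable (\<lambda>n. real (trace_count R (A - L) n) * p ^ n)"
    by (rule summable_power_series_dominated[OF trace_count_mono[OF assms(1) Diff_subset] assms(3,4)])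
  ultimately have "(\<Sum>n. real (card (traces_max_within R A L n)) * p ^ n) * (\<Sum>n. real (trace_count R (A - L) n) * p ^ n)
      = (\<Sum>n. \<Sum>k\<le>n. real (card (traces_max_within R A L k)) * p ^ k * (real (trace_count R (A - L) (n - k)) * p ^ (n - k)))"
    using assms(3) by (intro Cauchy_product) auto
  also have "\<dots> = (\<Sum>n. real (trace_count R A n) * p ^ n)"
  proof (rule suminf_cong)
    fix n
    have "(\<Sum>k\<le>n. real (card (traces_max_within R A L k)) * p ^ k * (real (trace_count R (A - L) (n - k)) * p ^ (n - k)))
        = (\<Sum>k\<le>n. real (card (traces_max_within R A L k) * trace_count R (A - L) (n - k)) * p ^ n)"
    proof (rule sum.cong[OF refl])
      fix k assume "k \<in> {..n}"
      then have "p ^ k * p ^ (n - k) = p ^ n"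
        by (simp flip: power_add)
      then show "real (card (traces_max_within R A L k)) * p ^ k * (real (trace_count R (A - L) (n - k)) * p ^ (n - k))
          = real (card (traces_max_within R A L k) * trace_count R (A - L) (n - k)) * p ^ n"
        by (simp add: algebra_simps)
    qed
    also have "\<dots> = real (trace_count R A n) * p ^ n"
      unfolding trace_count_factorization[OF assms(1,2), of n L] by (simp add: sum_distrib_right)
    finally show "(\<Sum>k\<le>n. real (card (traces_max_within R A L k)) * p ^ k * (real (trace_count R (A - L) (n - k)) * p ^ (n - k)))
        = real (trace_count R A n) * p ^ n" .
  qed
  finally show ?thesis .
qed

section \<open>Pyramids\<close>

lemma Pyr_length_0: "{x \<in> Pyr R Sig a1. tlen x = 0} = {}"
  by (auto simp: Pyr_def)

lemma Pyr_length_Suc: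
  "{x \<in> Pyr R Sig a1. tlen x = Suc n}
     = (\<lambda>z. trace_append R z (trace_class R [a1])) ` traces_max_within R (Sig - {a1}) (Lnb R Sig a1) n"
  (is "?P = ?f ` ?B")
proof (intro equalityI subsetI)
  fix x assume "x \<in> ?P"
  then obtain w where w: "x = trace_class R (w @ [a1])" "set w \<subseteq> Sig - {a1}"
      "last_letters R w \<subseteq> Lnb R Sig a1" "length w = n"
    unfolding Pyr_def by auto
  then have "trace_class R w \<in> ?B"
    unfolding traces_max_within_def traces_of_length_def by auto
  then show "x \<in> ?f ` ?B"
    using w(1) by (intro image_eqI[where x="trace_class R w"]) simp_all
next
  fix x assume "x \<in> ?f ` ?B"
  then obtain w where "x = trace_class R (w @ [a1])" "set w \<subseteq> Sig - {a1}"
      "last_letters R w \<subseteq> Lnb R Sig a1" "length w = n"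
    unfolding traces_max_within_def traces_of_length_def by auto
  then show "x \<in> ?P"
    unfolding Pyr_def by auto
qed

lemma infsum_Pyr:
  fixes p :: real
  assumes "finite Sig" "0 \<le> p"
    and "summable (\<lambda>n. real (card (traces_max_within R (Sig - {a1}) (Lnb R Sig a1) n)) * p ^ n)"
  shows "(\<Sum>\<^sub>\<infinity>x\<in>Pyr R Sig a1. p ^ tlen x)
    = p * (\<Sum>n. real (card (traces_max_within R (Sig - {a1}) (Lnb R Sig a1) n)) * p ^ n)"
proof -
  let ?Z = "\<lambda>n. real (card (traces_max_within R (Sig - {a1}) (Lnb R Sig a1) n)) * p ^ n"
  define c where "c = (\<lambda>n. real (card {x \<in> Pyr R Sig a1. tlen x = n}) * p ^ n)"
  have "card {x \<in> Pyr R Sig a1. tlen x = Suc n} = card (traces_max_within R (Sig - {a1}) (Lnb R Sig a1) n)" for n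
    unfolding Pyr_length_Suc
    by (rule card_image, rule inj_on_subset[OF inj_on_trace_append_right])
      (auto simp: traces_max_within_def traces_of_length_def)
  then have "(\<lambda>n. c (Suc n)) = (\<lambda>n. p * ?Z n)"
    by (simp add: c_def mult_ac)
  then have "c sums (p * suminf ?Z)"
    using sums_Suc_iff[of c] sums_mult[OF summable_sums[OF assms(3)], of p]
    by (simp add: c_def Pyr_length_0)
  moreover have "finite {x \<in> Pyr R Sig a1. tlen x = n}" for n
    using assms(1) by (cases n) (auto simp: Pyr_length_0 Pyr_length_Suc traces_max_within_def finite_traces_of_length)
  ultimately show ?thesis
    using assms(2) by (subst infsum_power_by_size) (auto simp: c_def sums_iff)
qed

lemma pyramid_base_series:
  fixes p :: real
  assumes "finite Sig" "\<forall>a\<in>Sig. (a, a) \<in> R" "sym R" "a1 \<in> Sig" "0 \<le> p" "p < p_root R Sig"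
  shows "(\<Sum>n. real (card (traces_max_within R (Sig - {a1}) (Lnb R Sig a1) n)) * p ^ n)
    = mu R (Sig - Lnb R Sig a1) p / mu R (Sig - {a1}) p"
proof -
  let ?L = "Lnb R Sig a1"
  let ?Z = "\<Sum>n. real (card (traces_max_within R (Sig - {a1}) ?L n)) * p ^ n"
  define G where "G S = (\<Sum>n. real (trace_count R S n) * p ^ n)" for S
  have summable: "summable (\<lambda>n. real (trace_count R S n) * p ^ n)" if "S \<subseteq> Sig" for S
    by (rule summable_trace_count_subset[OF assms(1,3) that assms(5,6)])
  have mu: "G S * mu R S p = 1" if "S \<subseteq> Sig" for S
    unfolding G_def
    by (rule trace_series_times_mu[OF finite_subset[OF that assms(1)] assms(3) summable[OF that]])
  have "Sig - {a1} - ?L = Sig - ?L"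
    using assms(2,4) by (auto simp: Lnb_def)
  then have factor: "?Z * G (Sig - ?L) = G (Sig - {a1})"
    unfolding G_def
    using trace_series_factorization[OF finite_subset[OF Diff_subset[of Sig "{a1}"] assms(1)] assms(3,5)
        summable[OF Diff_subset[of Sig "{a1}"]], of ?L]
    by simp
  have "mu R (Sig - {a1}) p \<noteq> 0"
    using mu[of "Sig - {a1}"] by auto
  then have G1: "G (Sig - {a1}) = 1 / mu R (Sig - {a1}) p"
    using mu[of "Sig - {a1}"] by (simp add: field_simps)
  have "?Z = ?Z * (G (Sig - ?L) * mu R (Sig - ?L) p)"
    using mu[of "Sig - ?L"] by simp
  also have "\<dots> = G (Sig - {a1}) * mu R (Sig - ?L) p"
    using factor by (simp only: mult.assoc[symmetric])
  finally show ?thesis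
    using G1 by simp
qed

theorem mainTheorem6:
  fixes Sig :: "'a set" and R :: "('a \<times> 'a) set" and a1 :: 'a and p :: real
  assumes "finite Sig"
    and "\<forall>a\<in>Sig. (a, a) \<in> R"
    and "sym R"
    and "a1 \<in> Sig"
    and "0 < p" and "p < p_root R Sig"
  shows "Bdist R Sig p (Pyr R Sig a1)
           = mu R Sig p * p * mu R (Sig - Lnb R Sig a1) p / mu R (Sig - {a1}) p"
proof -
  have "0 \<le> p"
    using assms(5) by simp
  then have "summable (\<lambda>n. real (card (traces_max_within R (Sig - {a1}) (Lnb R Sig a1) n)) * p ^ n)"
    using summable_trace_count_subset[OF assms(1,3) Diff_subset[of Sig "{a1}"] _ assms(6)] assms(1)
    by (intro summable_traces_max_within) simp_all
  then have "(\<Sum>\<^sub>\<infinity>x\<in>Pyr R Sig a1. p ^ tlen x) = p * (mu R (Sig - Lnb R Sig a1) p / mu R (Sig - {a1}) p)"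
    using assms by (simp add: infsum_Pyr pyramid_base_series)
  then show ?thesis
    unfolding Bdist_def infsum_cmult_right' by simp
qed

end
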